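(* Under Assumptions A1–A4, the core Two-Tailed Averaging algorithm has infinitely many switch points: for every evaluation step $n$ there exists a switch point $n_s\ge n$.
   Context: Let $\Theta=\mathbb{R}^d$, let $(\theta_t)_{t\in\mathbb{N}_0}$ be a sequence in $\Theta$, let $f\colon\Theta\to\mathbb{R}$ be a loss function, and let $E\in\mathbb{N}$ be the evaluation period. Evaluation steps are the multiples of $E$. For integers $t\ge \Delta\ge 1$ write $\mathrm{avg}(t,\Delta)=\frac{1}{\Delta}\sum_{i=t+1-\Delta}^{t}\theta_i$; set $f(\mathrm{avg}(t,0))=+\infty$. Core Two-Tailed Averaging: it maintains integers $S,L$ and vectors $\theta^S,\theta^L$, initially $S=L=0$, $\theta^S=\theta^L=0$. For $t=1,2,\dots$: first $\theta_t$ is added to both averages, i.e. $\theta^S\leftarrow\theta^S+(\theta_t-\theta^S)/(S+1)$, $S\leftarrow S+1$, and $\theta^L\leftarrow\theta^L+(\theta_t-\theta^L)/(L+1)$, $L\leftarrow L+1$ (so $\theta^S=\mathrm{avg}(t,S)$, $\theta^L=\mathrm{avg}(t,L)$). Then, if $E$ divides $t$: if $f(\theta^S)\le f(\theta^L)$, a switch is performed: $L\leftarrow S$, $\theta^L\leftarrow\theta^S$, $S\leftarrow 0$. A time step $n$ is a switch point if a switch is performed at $t=n$. Optimal length: for $t\ge1$, $\mathcal{O}(t)$ is a (fixed) minimizer of $\Delta\mapsto f(\mathrm{avg}(t,\Delta))$ over $\Delta\in\{1,\dots,t\}$; $\mathcal{O}_E(n)=\lfloor \mathcal{O}(n)/E\rfloor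 E$ and $\mathcal{O}^E(n)=\lceil \mathcal{O}(n)/E\rceil E$. Assumptions (for all evaluation steps $n\ge E$): A1: $\Delta\mapsto f(\mathrm{avg}(n,\Delta))$ is strictly decreasing on $\Delta\in\{0,E,2E,\dots,\mathcal{O}_E(n)\}$. A2: for every integer $n_+$ with $\mathcal{O}^E(n)\le n_+\le n$, $f(\mathrm{avg}(n,\mathcal{O}^E(n)))\le f(\mathrm{avg}(n,n_+))$. A3: there exists a positive multiple $n_s$ of $E$ with $\mathcal{O}(n+n_s)-\mathcal{O}(n)<n_s$. A4: $\mathcal{O}(n)\le\mathcal{O}(n+E)$. *)

theory Defs
  imports "HOL-Analysis.Analysis"
begin


definition avg :: "(nat \<Rightarrow> real ^ 'd) \<Rightarrow> nat \<Rightarrow> nat \<Rightarrow> real ^ 'd" where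
  "avg theta t Delta = (1 / real Delta) *\<^sub>R (\<Sum>i\<in>{t + 1 - Delta..t}. theta i)"

definition favg :: "(real ^ 'd \<Rightarrow> real) \<Rightarrow> (nat \<Rightarrow> real ^ 'd) \<Rightarrow> nat \<Rightarrow> nat \<Rightarrow> ereal" where
  "favg f theta t Delta = (if Delta = 0 then \<infinity> else ereal (f (avg theta t Delta)))"

text \<open>State of core Two-Tailed Averaging: (S, L, theta^S, theta^L).\<close>
type_synonym 'd tta_state = "nat \<times> nat \<times> (real ^ 'd) \<times> (real ^ 'd)"

definition tta_add :: "real ^ 'd \<Rightarrow> 'd tta_state \<Rightarrow> 'd tta_state" where
  "tta_add x st = (case st of (S, L, xS, xL) \<Rightarrow>
      (S + 1, L + 1,
       xS + (1 / real (S + 1)) *\<^sub>R (x - xS),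
       xL + (1 / real (L + 1)) *\<^sub>R (x - xL)))"

definition tta_switch_cond :: "(real ^ 'd \<Rightarrow> real) \<Rightarrow> nat \<Rightarrow> nat \<Rightarrow> 'd tta_state \<Rightarrow> bool" where
  "tta_switch_cond f E t st = (E dvd t \<and> (case st of (S, L, xS, xL) \<Rightarrow> f xS \<le> f xL))"

definition tta_step :: "(real ^ 'd \<Rightarrow> real) \<Rightarrow> nat \<Rightarrow> (nat \<Rightarrow> real ^ 'd) \<Rightarrow> nat \<Rightarrow> 'd tta_state \<Rightarrow> 'd tta_state" where
  "tta_step f E theta t st =
     (let st' = tta_add (theta t) st in
      if tta_switch_cond f E t st'
      then (case st' of (S, L, xS, xL) \<Rightarrow> (0, S, xS, xS))
      else st')"

fun tta_state :: "(real ^ 'd \<Rightarrow> real) \<Rightarrow> nat \<Rightarrow> (nat \<Rightarrow> real ^ 'd) \<Rightarrow> nat \<Rightarrow> 'd tta_state" where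
  "tta_state f E theta 0 = (0, 0, 0, 0)"
| "tta_state f E theta (Suc t) = tta_step f E theta (Suc t) (tta_state f E theta t)"

definition switch_point :: "(real ^ 'd \<Rightarrow> real) \<Rightarrow> nat \<Rightarrow> (nat \<Rightarrow> real ^ 'd) \<Rightarrow> nat \<Rightarrow> bool" where
  "switch_point f E theta n \<longleftrightarrow> n \<ge> 1 \<and>
     tta_switch_cond f E n (tta_add (theta n) (tta_state f E theta (n - 1)))"

definition is_opt_length :: "(real ^ 'd \<Rightarrow> real) \<Rightarrow> (nat \<Rightarrow> real ^ 'd) \<Rightarrow> (nat \<Rightarrow> nat) \<Rightarrow> bool" where
  "is_opt_length f theta Opt \<longleftrightarrow> (\<forall>t\<ge>1. Opt t \<in> {1..t} \<and>
      (\<forall>Delta\<in>{1..t}. f (avg theta t (Opt t)) \<le> f (avg theta t Delta)))"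

definition opt_floor :: "(nat \<Rightarrow> nat) \<Rightarrow> nat \<Rightarrow> nat \<Rightarrow> nat" where
  "opt_floor Opt E n = (Opt n div E) * E"

definition opt_ceil :: "(nat \<Rightarrow> nat) \<Rightarrow> nat \<Rightarrow> nat \<Rightarrow> nat" where
  "opt_ceil Opt E n = ((Opt n + E - 1) div E) * E"

end

theory Submission
  imports Defs
begin

text \<open>
  Suppose no switch happens after the evaluation step \<open>m\<close>, at which the short average has
  length \<open>E\<close>. Then at every later evaluation step \<open>t\<close> the short average has length
  \<open>S = t + E - m \<le> L\<close>. If \<open>S\<close> equalled \<open>\<O>\<^sup>E(t)\<close>, A2 would make the short average at least as good
  as the long one and force a switch. As \<open>S\<close> and \<open>\<O>\<^sup>E(t)\<close> are multiples of \<open>E\<close> and \<open>\<O>\<^sup>E\<close> is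
  monotone by A4, induction over the evaluation steps keeps \<open>S < \<O>\<^sup>E(t)\<close>, i.e.
  \<open>\<O>(m + jE) > jE\<close> for all \<open>j\<close>. But by A3 the positive integers \<open>\<O>(m + jE) - jE\<close> can always be
  made strictly smaller, which is impossible. After a switch the short average regrows to length
  \<open>E\<close> by the next evaluation step, so switches recur forever.
\<close>

lemma running_mean_step:
  fixes a x :: "'a::real_vector"
  shows "(1 / real (Suc S)) *\<^sub>R (real S *\<^sub>R a + x) = a + (1 / real (Suc S)) *\<^sub>R (x - a)"
proof -
  have "real S *\<^sub>R a + x = real (Suc S) *\<^sub>R a + (x - a)"
    by (simp add: algebra_simps)
  then show ?thesis
    by (simp only: scaleR_add_right scaleR_scaleR) simp
qed

lemma scaleR_avg: "real S *\<^sub>R avg theta t S = (\<Sum>i\<in>{t + 1 - S..t}. theta i)"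
  by (cases "S = 0") (simp_all add: avg_def)

lemma avg_Suc:
  assumes "S \<le> t"
  shows "avg theta (Suc t) (Suc S) = avg theta t S + (1 / real (Suc S)) *\<^sub>R (theta (Suc t) - avg theta t S)"
proof -
  have "avg theta (Suc t) (Suc S) = (1 / real (Suc S)) *\<^sub>R (real S *\<^sub>R avg theta t S + theta (Suc t))"
    using assms by (auto simp: avg_def scaleR_avg Suc_diff_le)
  then show ?thesis
    by (simp only: running_mean_step)
qed

definition tta_mid_state :: "(real ^ 'd \<Rightarrow> real) \<Rightarrow> nat \<Rightarrow> (nat \<Rightarrow> real ^ 'd) \<Rightarrow> nat \<Rightarrow> 'd tta_state" where
  "tta_mid_state f E theta t = tta_add (theta t) (tta_state f E theta (t - 1))"

definition tta_inv :: "(nat \<Rightarrow> real ^ 'd) \<Rightarrow> nat \<Rightarrow> 'd tta_state \<Rightarrow> bool" where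
  "tta_inv theta t st \<longleftrightarrow> (case st of (S, L, xS, xL) \<Rightarrow> S \<le> L \<and> L \<le> t \<and>
      (0 < S \<longrightarrow> xS = avg theta t S) \<and> (0 < L \<longrightarrow> xL = avg theta t L))"

lemma fst_tta_add: "fst (tta_add x st) = Suc (fst st)"
  by (cases st) (simp add: tta_add_def)

lemma tta_inv_add:
  assumes "tta_inv theta t st"
  shows "tta_inv theta (Suc t) (tta_add (theta (Suc t)) st)"
proof -
  obtain S L xS xL where st: "st = (S, L, xS, xL)"
    by (cases st) auto
  have update: "x + (1 / real (Suc R)) *\<^sub>R (theta (Suc t) - x) = avg theta (Suc t) (Suc R)"
    if "R \<le> t" "0 < R \<Longrightarrow> x = avg theta t R" for R x
    using that by (cases "R = 0") (simp add: avg_def, simp add: avg_Suc)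
  have "S \<le> L" "L \<le> t" "0 < S \<Longrightarrow> xS = avg theta t S" "0 < L \<Longrightarrow> xL = avg theta t L"
    using assms by (auto simp: tta_inv_def st)
  then show ?thesis
    using update[of S xS] update[of L xL] by (simp add: tta_inv_def tta_add_def st)
qed

lemma tta_inv_step:
  assumes "tta_inv theta t st"
  shows "tta_inv theta (Suc t) (tta_step f E theta (Suc t) st)"
  using tta_inv_add[OF assms]
  by (auto simp: tta_step_def Let_def tta_inv_def split: prod.splits)

lemma tta_inv_state: "tta_inv theta t (tta_state f E theta t)"
proof (induction t)
  case 0
  show ?case by (simp add: tta_inv_def)
next
  case (Suc t)
  then show ?case by (simp add: tta_inv_step)
qed

lemma tta_inv_mid_state: "t \<ge> 1 \<Longrightarrow> tta_inv theta t (tta_mid_state f E theta t)"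
  using tta_inv_add[OF tta_inv_state, of theta "t - 1"] by (simp add: tta_mid_state_def)

lemma switch_point_iff:
  "switch_point f E theta t \<longleftrightarrow> t \<ge> 1 \<and> tta_switch_cond f E t (tta_mid_state f E theta t)"
  by (simp add: switch_point_def tta_mid_state_def)

lemma switch_point_dvd: "switch_point f E theta t \<Longrightarrow> E dvd t"
  by (simp add: switch_point_def tta_switch_cond_def)

lemma tta_state_no_switch:
  "\<not> switch_point f E theta (Suc t) \<Longrightarrow> tta_state f E theta (Suc t) = tta_mid_state f E theta (Suc t)"
  by (simp add: switch_point_iff tta_step_def tta_mid_state_def Let_def)

lemma fst_tta_state_switch_point:
  "switch_point f E theta t \<Longrightarrow> fst (tta_state f E theta t) = 0"
  by (cases t) (auto simp: switch_point_iff tta_step_def tta_mid_state_def Let_def split: prod.splits)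

lemma fst_tta_mid_state: "1 \<le> t \<Longrightarrow> fst (tta_mid_state f E theta t) = Suc (fst (tta_state f E theta (t - 1)))"
  by (simp add: tta_mid_state_def fst_tta_add)

lemma fst_tta_mid_state_no_switch:
  assumes "1 \<le> m" and no_switch: "\<forall>u\<in>{m..<m + k}. \<not> switch_point f E theta u"
  shows "fst (tta_mid_state f E theta (m + k)) = fst (tta_mid_state f E theta m) + k"
  using no_switch
proof (induction k)
  case (Suc k)
  have "tta_state f E theta (m + k) = tta_mid_state f E theta (m + k)"
    using tta_state_no_switch[of f E theta "m + k - 1"] Suc.prems assms(1) by simp
  then show ?case
    using Suc fst_tta_mid_state[of "Suc (m + k)" f E theta] by simp
qed simp

lemma fst_tta_mid_state_period:
  assumes "E \<ge> 1" "E dvd s" "fst (tta_state f E theta s) = 0"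
  shows "fst (tta_mid_state f E theta (s + E)) = E"
proof -
  have "\<not> switch_point f E theta u" if "Suc s \<le> u" "u < s + E" for u
  proof
    assume "switch_point f E theta u"
    then have "E dvd u - s"
      by (intro dvd_diff_nat switch_point_dvd assms(2))
    then show False
      using that by (simp add: nat_dvd_not_less)
  qed
  then have "fst (tta_mid_state f E theta (Suc s + (E - 1))) = fst (tta_mid_state f E theta (Suc s)) + (E - 1)"
    using assms(1) by (intro fst_tta_mid_state_no_switch) auto
  then show ?thesis
    using assms fst_tta_mid_state[of "Suc s" f E theta] by simp
qed

lemma dvd_opt_ceil: "E dvd opt_ceil Opt E n"
  by (simp add: opt_ceil_def)

lemma opt_ceil_le: "opt_ceil Opt E n \<le> Opt n + E - 1"
  unfolding opt_ceil_def by (metis div_mult_mod_eq le_add1)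

lemma opt_ceil_ge_period:
  assumes "1 \<le> E" "1 \<le> Opt n"
  shows "E \<le> opt_ceil Opt E n"
proof -
  have "1 \<le> (Opt n + E - 1) div E"
    using assms div_le_mono[of E "Opt n + E - 1" E] by simp
  then show ?thesis
    by (simp add: opt_ceil_def)
qed

lemma opt_ceil_mono: "Opt m \<le> Opt n \<Longrightarrow> opt_ceil Opt E m \<le> opt_ceil Opt E n"
  unfolding opt_ceil_def by (intro mult_le_mono1 div_le_mono) simp

lemma dvd_less_imp_add_le:
  fixes a b E :: nat
  assumes "E dvd a" "E dvd b" "a < b"
  shows "a + E \<le> b"
proof -
  obtain p q where a: "a = E * p" and b: "b = E * q"
    using assms(1,2) unfolding dvd_def by blast
  then have "Suc p \<le> q"
    using assms(3) by simp
  then have "E * Suc p \<le> E * q"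
    by (rule mult_le_mono2)
  then show ?thesis
    by (simp add: a b)
qed

lemma no_descending_chain_bounded_int:
  fixes c :: "'a \<Rightarrow> int"
  assumes "\<And>j. b \<le> c j" and "\<And>j. \<exists>k. c k < c j"
  shows False
proof -
  obtain j where least: "\<forall>k. nat (c j - b) \<le> nat (c k - b)"
    using ex_has_least_nat[of "\<lambda>_. True" undefined "\<lambda>j. nat (c j - b)"] by blast
  obtain k where "c k < c j"
    using assms(2) by blast
  moreover have "nat (c j - b) \<le> nat (c k - b)"
    using least by blast
  ultimately show False
    using assms(1)[of k] by linarith
qed

locale tta_assumptions =
  fixes f :: "real ^ 'd \<Rightarrow> real" and E :: nat and theta :: "nat \<Rightarrow> real ^ 'd" and Opt :: "nat \<Rightarrow> nat"
  assumes E_pos: "E \<ge> 1"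
    and Opt: "is_opt_length f theta Opt"
    and A2: "\<And>n np. E dvd n \<Longrightarrow> n \<ge> E \<Longrightarrow> opt_ceil Opt E n \<le> np \<Longrightarrow> np \<le> n \<Longrightarrow>
               favg f theta n (opt_ceil Opt E n) \<le> favg f theta n np"
    and A3: "\<And>n. E dvd n \<Longrightarrow> n \<ge> E \<Longrightarrow>
               \<exists>ns>0. E dvd ns \<and> int (Opt (n + ns)) - int (Opt n) < int ns"
    and A4: "\<And>n. E dvd n \<Longrightarrow> n \<ge> E \<Longrightarrow> Opt n \<le> Opt (n + E)"
begin

lemma Opt_pos: "1 \<le> t \<Longrightarrow> 1 \<le> Opt t"
  using Opt by (auto simp: is_opt_length_def)

lemma switch_point_at_opt_ceil:
  assumes "E dvd t" "E \<le> t" and S: "fst (tta_mid_state f E theta t) = opt_ceil Opt E t"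
  shows "switch_point f E theta t"
proof -
  have t: "1 \<le> t"
    using assms E_pos by simp
  obtain S L xS xL where mid: "tta_mid_state f E theta t = (S, L, xS, xL)"
    by (cases "tta_mid_state f E theta t") auto
  have "S = opt_ceil Opt E t"
    using S mid by simp
  moreover have "1 \<le> S"
    using calculation opt_ceil_ge_period[of E Opt t] E_pos Opt_pos[OF t] by simp
  moreover have "S \<le> L" "L \<le> t" "xS = avg theta t S" "xL = avg theta t L"
    using tta_inv_mid_state[OF t, of theta f E] calculation by (auto simp: mid tta_inv_def)
  ultimately have "f xS \<le> f xL"
    using A2[of t L] assms by (simp add: favg_def)
  then show ?thesis
    using t assms(1) by (simp add: switch_point_iff tta_switch_cond_def mid)
qed

lemma opt_ceil_exceeds_counter:
  assumes m: "E \<le> m" "E dvd m" "fst (tta_mid_state f E theta m) = E"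
    and no_switch: "\<forall>t\<ge>m. \<not> switch_point f E theta t"
  shows "E + j * E < opt_ceil Opt E (m + j * E)"
proof -
  have "fst (tta_mid_state f E theta (m + k * E)) = fst (tta_mid_state f E theta m) + k * E" for k
    using no_switch m(1) E_pos by (intro fst_tta_mid_state_no_switch) auto
  then have ne: "E + k * E \<noteq> opt_ceil Opt E (m + k * E)" for k
    using switch_point_at_opt_ceil[of "m + k * E"] m no_switch by fastforce
  show ?thesis
  proof (induction j)
    case 0
    show ?case
      using ne[of 0] opt_ceil_ge_period[of E Opt m] Opt_pos[of m] m(1) E_pos by simp
  next
    case (Suc j)
    have "E + Suc j * E \<le> opt_ceil Opt E (m + j * E)"
      using dvd_less_imp_add_le[OF _ dvd_opt_ceil Suc.IH] m(2) by simp
    also have "\<dots> \<le> opt_ceil Opt E (m + Suc j * E)"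
      using opt_ceil_mono A4[of "m + j * E"] m by (simp add: algebra_simps)
    finally show ?case
      using ne[of "Suc j"] by simp
  qed
qed

lemma switch_point_beyond:
  assumes m: "E \<le> m" "E dvd m" "fst (tta_mid_state f E theta m) = E"
  shows "\<exists>t\<ge>m. switch_point f E theta t"
proof (rule ccontr)
  assume "\<not> ?thesis"
  then have no_switch: "\<forall>t\<ge>m. \<not> switch_point f E theta t"
    by blast
  define c where "c j = int (Opt (m + j * E)) - int (j * E)" for j
  have "1 \<le> c j" for j
  proof -
    have "j * E < Opt (m + j * E)"
      using opt_ceil_exceeds_counter[OF m no_switch, of j] opt_ceil_le[of Opt E "m + j * E"] E_pos
      by linarith
    then show ?thesis
      by (simp add: c_def flip: of_nat_mult)
  qed
  moreover have "\<exists>k. c k < c j" for j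
  proof -
    obtain ns where "0 < ns" "E dvd ns" "int (Opt (m + j * E + ns)) - int (Opt (m + j * E)) < int ns"
      using A3[of "m + j * E"] m by auto
    moreover from \<open>E dvd ns\<close> obtain k where "ns = k * E"
      by (metis dvd_def mult.commute)
    ultimately have "c (j + k) < c j"
      by (simp add: c_def algebra_simps)
    then show ?thesis ..
  qed
  ultimately show False
    by (rule no_descending_chain_bounded_int)
qed

lemma switch_point_after:
  assumes "E dvd s" "fst (tta_state f E theta s) = 0"
  shows "\<exists>t>s. switch_point f E theta t"
proof -
  have "\<exists>t\<ge>s + E. switch_point f E theta t"
    using fst_tta_mid_state_period[OF E_pos assms] assms(1) by (intro switch_point_beyond) auto
  then obtain t where "t \<ge> s + E" "switch_point f E theta t"
    by blast
  then show ?thesis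
    using E_pos by (intro exI[of _ t]) simp
qed

lemma switch_points_unbounded: "\<exists>t\<ge>n. switch_point f E theta t"
proof -
  have "\<exists>s\<ge>n. E dvd s \<and> fst (tta_state f E theta s) = 0"
  proof (induction n)
    case 0
    show ?case by (intro exI[of _ 0]) simp
  next
    case (Suc n)
    then obtain s where s: "n \<le> s" "E dvd s" "fst (tta_state f E theta s) = 0"
      by blast
    obtain t where "s < t" "switch_point f E theta t"
      using switch_point_after[OF s(2,3)] by blast
    then show ?case
      using s(1) switch_point_dvd fst_tta_state_switch_point by (intro exI[of _ t]) auto
  qed
  then show ?thesis
    using switch_point_after less_imp_le order_trans by meson
qed

end

theorem mainTheorem3:
  fixes theta :: "nat \<Rightarrow> real ^ 'd" and f :: "real ^ 'd \<Rightarrow> real"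
    and E :: nat and Opt :: "nat \<Rightarrow> nat"
  assumes E_pos: "E \<ge> 1"
    and Opt: "is_opt_length f theta Opt"
    and A1: "\<And>n k1 k2. E dvd n \<Longrightarrow> n \<ge> E \<Longrightarrow> k1 < k2 \<Longrightarrow> k2 * E \<le> opt_floor Opt E n \<Longrightarrow>
               favg f theta n (k2 * E) < favg f theta n (k1 * E)"
    and A2: "\<And>n np. E dvd n \<Longrightarrow> n \<ge> E \<Longrightarrow> opt_ceil Opt E n \<le> np \<Longrightarrow> np \<le> n \<Longrightarrow>
               favg f theta n (opt_ceil Opt E n) \<le> favg f theta n np"
    and A3: "\<And>n. E dvd n \<Longrightarrow> n \<ge> E \<Longrightarrow>
               \<exists>ns>0. E dvd ns \<and> int (Opt (n + ns)) - int (Opt n) < int ns"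
    and A4: "\<And>n. E dvd n \<Longrightarrow> n \<ge> E \<Longrightarrow> Opt n \<le> Opt (n + E)"
  shows "\<forall>n. E dvd n \<longrightarrow> (\<exists>ns\<ge>n. switch_point f E theta ns)"
proof -
  interpret tta_assumptions f E theta Opt
    using E_pos Opt A2 A3 A4 by unfold_locales
  show ?thesis
    using switch_points_unbounded by blast
qed

end
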